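(* Let $d\ge 2$, let $k\ge 0$ and $c>0$ be fixed, and $p=\frac{c}{n}$. Fix $\tau\in\Delta_{n-1}(d-1)$. For $Y\in Y_d(n,p)$ define $\mathcal{S}_0(Y)=\tau$ and, for $i\ge1$, let $\mathcal{S}_i(Y)$ be the union of $\mathcal{S}_{i-1}(Y)$ and the complex generated by all $d$-simplices of $Y$ that contain some $(d-1)$-face of $\mathcal{S}_{i-1}(Y)$. Let $A_{k+1}$ be the event that $\mathcal{S}_{k+1}(Y)$ is a $d$-tree, and let $D$ be the event that every $(d-1)$-simplex $\eta\in\Delta_{n-1}(d-1)$ is contained in at most $\log n$ $d$-simplices of $Y$. Then $\Pr[A_{k+1}\cap D]=1-o(1)$ as $n\to\infty$.
   Context: $\Delta_{n-1}$ denotes the $(n-1)$-simplex on vertex set $[n]$, $\Delta_{n-1}(i)$ its set of $i$-faces. $Y_d(n,p)$ is the probability space of complexes $\Delta_{n-1}^{(d-1)}\subset Y\subset\Delta_{n-1}^{(d)}$ in which each $d$-simplex is included independently with probability $p$. A simplicial complex $T$ on vertex set $V$ with $|V|=\ell\ge d$ is a $d$-tree if there is an ordering $V=\{v_1,\dots,v_\ell\}$ such that for every $d+1\le i\le \ell$ the link of $v_i$ in the induced subcomplex $T[v_1,\dots,v_i]$ is a $(d-1)$-dimensional simplex. *)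

theory Defs
  imports Complex_Main
begin

text \<open>Vertex set [n] is rendered as {0..<n}. A simplex is a finite nonempty set of
vertices; a simplicial complex is the set of its (nonempty) faces.\<close>

definition faces :: "nat \<Rightarrow> nat \<Rightarrow> nat set set" where
  "faces n j = {\<sigma>. \<sigma> \<subseteq> {0..<n} \<and> card \<sigma> = Suc j}"

definition gen :: "nat set set \<Rightarrow> nat set set" where
  "gen F = {\<sigma>. \<sigma> \<noteq> {} \<and> (\<exists>f\<in>F. \<sigma> \<subseteq> f)}"

text \<open>Y is given by its set of d-simplices (a subset of faces n d).
  S Y d \<tau> i is the complex S_i(Y).\<close>
primrec S :: "nat set set \<Rightarrow> nat \<Rightarrow> nat set \<Rightarrow> nat \<Rightarrow> nat set set" where
  "S Y d \<tau> 0 = gen {\<tau>}"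
| "S Y d \<tau> (Suc i) = S Y d \<tau> i \<union>
      gen {\<sigma>\<in>Y. \<exists>\<eta>\<in>S Y d \<tau> i. card \<eta> = d \<and> \<eta> \<subseteq> \<sigma>}"

definition induced :: "nat set set \<Rightarrow> nat set \<Rightarrow> nat set set" where
  "induced K W = {\<sigma>\<in>K. \<sigma> \<subseteq> W}"

definition link :: "nat set set \<Rightarrow> nat \<Rightarrow> nat set set" where
  "link K v = {\<sigma>\<in>K. v \<notin> \<sigma> \<and> insert v \<sigma> \<in> K}"

definition is_simplex :: "nat set set \<Rightarrow> nat \<Rightarrow> bool" where
  "is_simplex K j \<longleftrightarrow> (\<exists>s. finite s \<and> card s = Suc j \<and> K = gen {s})"

definition is_dtree :: "nat \<Rightarrow> nat set set \<Rightarrow> bool" where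
  "is_dtree d T \<longleftrightarrow> finite (\<Union>T) \<and> card (\<Union>T) \<ge> d \<and>
     (\<exists>vs. distinct vs \<and> set vs = \<Union>T \<and>
        (\<forall>i. d + 1 \<le> i \<and> i \<le> length vs \<longrightarrow>
           is_simplex (link (induced T (set (take i vs))) (vs ! (i - 1))) (d - 1)))"

text \<open>Probability of an event E (a predicate on the set of d-simplices of Y)
  in Y_d(n,p): each d-simplex independently with probability p.\<close>
definition prob_Yd :: "nat \<Rightarrow> nat \<Rightarrow> real \<Rightarrow> (nat set set \<Rightarrow> bool) \<Rightarrow> real" where
  "prob_Yd n d p E = (\<Sum>Y\<in>{Y. Y \<subseteq> faces n d \<and> E Y}.
      p ^ card Y * (1 - p) ^ (card (faces n d) - card Y))"

end

theory Submission
  imports Defs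
begin

text \<open>
  If S_(k+1)(Y) is not a d-tree, then some d-simplex \<sigma> of Y has all its vertices
  already reached by S_(k+1)(Y - {\<sigma>}): otherwise every layer only glues d-simplices
  along (d-1)-faces, each with a vertex of its own, which keeps the complex a d-tree.
  Conditioning on \<sigma> \<in> Y costs a factor p = c/n, and if all codegrees are at most
  ln n then S_(k+1)(Y - {\<sigma>}) has only polylogarithmically many vertices, hence
  there are only polylogarithmically many candidates \<sigma>; so this event has probability
  O(polylog(n)/n). A union bound over the (d-1)-faces shows that some codegree exceeds
  ln n with probability at most n^d (c^m/m!) for m = \<lfloor>ln n\<rfloor> + 1, which is o(1).
\<close>

section \<open>Random subsets of a finite set\<close>

definition Pr :: "'a set \<Rightarrow> real \<Rightarrow> ('a set \<Rightarrow> bool) \<Rightarrow> real" where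
  "Pr F p E = (\<Sum>Y\<in>{Y. Y \<subseteq> F \<and> E Y}. p ^ card Y * (1 - p) ^ (card F - card Y))"

lemma prob_Yd_eq_Pr: "prob_Yd n d p E = Pr (faces n d) p E"
  unfolding prob_Yd_def Pr_def ..

lemma Pr_cong: "(\<And>Y. Y \<subseteq> F \<Longrightarrow> E Y = E' Y) \<Longrightarrow> Pr F p E = Pr F p E'"
  unfolding Pr_def by (rule sum.cong) auto

lemma Pr_False [simp]: "Pr F p (\<lambda>_. False) = 0"
  by (simp add: Pr_def)

lemma Pr_eq_sum_Pow:
  "finite F \<Longrightarrow> Pr F p E = (\<Sum>Y\<in>Pow F. if E Y then p ^ card Y * (1 - p) ^ (card F - card Y) else 0)"
  unfolding Pr_def by (simp add: sum.If_cases Int_def conj_commute)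

lemma Pr_split:
  assumes F: "finite F" and a: "a \<in> F"
  shows "Pr F p E = p * Pr (F - {a}) p (\<lambda>Y. E (insert a Y)) + (1 - p) * Pr (F - {a}) p E"
proof -
  let ?w = "\<lambda>F Y. p ^ card Y * (1 - p) ^ (card F - card Y)"
  let ?In = "{Y. Y \<subseteq> F - {a} \<and> E (insert a Y)}" and ?Out = "{Y. Y \<subseteq> F - {a} \<and> E Y}"
  have cF: "card F = Suc (card (F - {a}))" using card_Suc_Diff1[OF F a] by simp
  have events: "{Y. Y \<subseteq> F \<and> E Y} = insert a ` ?In \<union> ?Out"
  proof (rule set_eqI, rule iffI)
    fix Y assume Y: "Y \<in> {Y. Y \<subseteq> F \<and> E Y}"
    show "Y \<in> insert a ` ?In \<union> ?Out"
    proof (cases "a \<in> Y")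
      case True
      then have "Y = insert a (Y - {a})" by auto
      then show ?thesis using Y by (auto intro!: image_eqI[of _ _ "Y - {a}"])
    qed (use Y in auto)
  qed (use a in auto)
  have inj: "inj_on (insert a) ?In"
    by (rule inj_onI) (metis Diff_insert_absorb mem_Collect_eq subset_Diff_insert)
  have "(\<Sum>Y\<in>insert a ` ?In. ?w F Y) = (\<Sum>Y\<in>?In. ?w F (insert a Y))"
    by (rule sum.reindex[OF inj, unfolded comp_def])
  also have "\<dots> = (\<Sum>Y\<in>?In. p * ?w (F - {a}) Y)"
  proof (rule sum.cong[OF refl])
    fix Y assume "Y \<in> ?In"
    then have "finite Y" "a \<notin> Y" using F finite_subset by auto
    then show "?w F (insert a Y) = p * ?w (F - {a}) Y" using cF by simp
  qed
  finally have sum_in: "(\<Sum>Y\<in>insert a ` ?In. ?w F Y) = p * Pr (F - {a}) p (\<lambda>Y. E (insert a Y))"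
    unfolding Pr_def by (simp add: sum_distrib_left)
  have "(\<Sum>Y\<in>?Out. ?w F Y) = (\<Sum>Y\<in>?Out. (1 - p) * ?w (F - {a}) Y)"
  proof (rule sum.cong[OF refl])
    fix Y assume "Y \<in> ?Out"
    then have "card Y \<le> card (F - {a})" using F by (simp add: card_mono)
    then have "card F - card Y = Suc (card (F - {a}) - card Y)" using cF by simp
    then show "?w F Y = (1 - p) * ?w (F - {a}) Y" by simp
  qed
  then have sum_out: "(\<Sum>Y\<in>?Out. ?w F Y) = (1 - p) * Pr (F - {a}) p E"
    unfolding Pr_def by (simp add: sum_distrib_left)
  have "Pr F p E = (\<Sum>Y\<in>insert a ` ?In. ?w F Y) + (\<Sum>Y\<in>?Out. ?w F Y)"
    unfolding Pr_def events
    by (rule sum.union_disjoint) (use F in \<open>auto intro: finite_subset[of _ "Pow F"]\<close>)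
  then show ?thesis using sum_in sum_out by simp
qed

lemma Pr_True: "finite F \<Longrightarrow> Pr F p (\<lambda>_. True) = 1"
proof (induction F rule: finite_induct)
  case (insert a F)
  then show ?case using Pr_split[of "insert a F" a p "\<lambda>_. True"] by simp
qed (simp add: Pr_def)

lemma Pr_mono:
  assumes "finite F" "0 \<le> p" "p \<le> 1" "\<And>Y. Y \<subseteq> F \<Longrightarrow> E Y \<Longrightarrow> E' Y"
  shows "Pr F p E \<le> Pr F p E'"
  unfolding Pr_def by (rule sum_mono2) (use assms in \<open>auto intro: finite_subset[of _ "Pow F"]\<close>)

lemma Pr_compl: "finite F \<Longrightarrow> Pr F p E = 1 - Pr F p (\<lambda>Y. \<not> E Y)"
proof -
  assume F: "finite F"
  have "Pr F p (\<lambda>_. True) = Pr F p E + Pr F p (\<lambda>Y. \<not> E Y)"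
    unfolding Pr_eq_sum_Pow[OF F] sum.distrib[symmetric] by (rule sum.cong) auto
  then show ?thesis using Pr_True[OF F] by simp
qed

lemma Pr_le_1: "finite F \<Longrightarrow> 0 \<le> p \<Longrightarrow> p \<le> 1 \<Longrightarrow> Pr F p E \<le> 1"
  using Pr_mono[of F p E "\<lambda>_. True"] Pr_True[of F p] by simp

lemma sum_Pr_le:
  assumes F: "finite F" and X: "finite X" and p: "0 \<le> p" "p \<le> 1"
    and B: "\<And>Y. Y \<subseteq> F \<Longrightarrow> real (card {x\<in>X. Q x Y}) \<le> B"
  shows "(\<Sum>x\<in>X. Pr F p (Q x)) \<le> B"
proof -
  let ?w = "\<lambda>Y. p ^ card Y * (1 - p) ^ (card F - card Y)"
  have "(\<Sum>x\<in>X. Pr F p (Q x)) = (\<Sum>Y\<in>Pow F. \<Sum>x\<in>X. if Q x Y then ?w Y else 0)"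
    unfolding Pr_eq_sum_Pow[OF F] by (rule sum.swap)
  also have "\<dots> = (\<Sum>Y\<in>Pow F. ?w Y * real (card {x\<in>X. Q x Y}))"
    by (rule sum.cong[OF refl]) (simp add: sum.If_cases X Int_def)
  also have "\<dots> \<le> (\<Sum>Y\<in>Pow F. ?w Y * B)"
    by (rule sum_mono, rule mult_left_mono) (use B p in auto)
  also have "\<dots> = B * Pr F p (\<lambda>_. True)"
    unfolding Pr_eq_sum_Pow[OF F] by (simp add: sum_distrib_left mult.commute)
  finally show ?thesis using Pr_True[OF F] by simp
qed

lemma Pr_union_bound:
  assumes F: "finite F" and X: "finite X" and p: "0 \<le> p" "p \<le> 1"
  shows "Pr F p (\<lambda>Y. \<exists>x\<in>X. E x Y) \<le> (\<Sum>x\<in>X. Pr F p (E x))"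
proof -
  let ?w = "\<lambda>Y. p ^ card Y * (1 - p) ^ (card F - card Y)"
  have "Pr F p (\<lambda>Y. \<exists>x\<in>X. E x Y) \<le> (\<Sum>Y\<in>Pow F. \<Sum>x\<in>X. if E x Y then ?w Y else 0)"
    unfolding Pr_eq_sum_Pow[OF F]
  proof (rule sum_mono)
    fix Y
    show "(if \<exists>x\<in>X. E x Y then ?w Y else 0) \<le> (\<Sum>x\<in>X. if E x Y then ?w Y else 0)"
    proof (cases "\<exists>x\<in>X. E x Y")
      case True
      then obtain x where x: "x \<in> X" "E x Y" by blast
      have "?w Y = (if E x Y then ?w Y else 0)" using x by simp
      also have "\<dots> \<le> (\<Sum>x\<in>X. if E x Y then ?w Y else 0)"
        by (rule member_le_sum) (use x X p in auto)
      finally show ?thesis using True by simp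
    qed (simp add: sum_nonneg p)
  qed
  also have "\<dots> = (\<Sum>x\<in>X. Pr F p (E x))"
    unfolding Pr_eq_sum_Pow[OF F] by (rule sum.swap)
  finally show ?thesis .
qed

lemma Pr_disj_le:
  assumes "finite F" "0 \<le> p" "p \<le> 1"
  shows "Pr F p (\<lambda>Y. A Y \<or> B Y) \<le> Pr F p A + Pr F p B"
proof -
  have "Pr F p (\<lambda>Y. A Y \<or> B Y) = Pr F p (\<lambda>Y. \<exists>x\<in>{True, False}. if x then A Y else B Y)"
    by (rule Pr_cong) auto
  also have "\<dots> \<le> (\<Sum>x\<in>{True, False}. Pr F p (\<lambda>Y. if x then A Y else B Y))"
    by (rule Pr_union_bound) (use assms in auto)
  finally show ?thesis by simp
qed

lemma Pr_superset:
  assumes "finite F" "A \<subseteq> F"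
  shows "Pr F p (\<lambda>Y. A \<subseteq> Y) = p ^ card A"
proof -
  have "finite A" using assms finite_subset by blast
  then show ?thesis
    using assms
  proof (induction A arbitrary: F rule: finite_induct)
    case empty
    then show ?case using Pr_True[of F p] by simp
  next
    case (insert a A)
    have "Pr F p (\<lambda>Y. insert a A \<subseteq> Y) = p * Pr (F - {a}) p (\<lambda>Y. insert a A \<subseteq> insert a Y)
           + (1 - p) * Pr (F - {a}) p (\<lambda>Y. insert a A \<subseteq> Y)"
      using insert.prems by (intro Pr_split) auto
    also have "Pr (F - {a}) p (\<lambda>Y. insert a A \<subseteq> Y) = 0"
      by (subst Pr_cong[where E' = "\<lambda>_. False"]) auto
    also have "Pr (F - {a}) p (\<lambda>Y. insert a A \<subseteq> insert a Y) = Pr (F - {a}) p (\<lambda>Y. A \<subseteq> Y)"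
      by (rule Pr_cong) (use insert in auto)
    also have "\<dots> = p ^ card A" using insert by auto
    finally show ?case using insert by simp
  qed
qed

lemma Pr_mem_and_remove:
  assumes F: "finite F" and a: "a \<in> F"
  shows "Pr F p (\<lambda>Y. a \<in> Y \<and> E (Y - {a})) = p * Pr F p (\<lambda>Y. E (Y - {a}))"
proof -
  have "Pr F p (\<lambda>Y. a \<in> Y \<and> E (Y - {a})) = p * Pr (F - {a}) p E"
    using Pr_split[OF F a, of p "\<lambda>Y. a \<in> Y \<and> E (Y - {a})"]
      Pr_cong[of "F - {a}" "\<lambda>Y. a \<in> Y \<and> E (Y - {a})" "\<lambda>_. False" p]
      Pr_cong[of "F - {a}" "\<lambda>Y. a \<in> insert a Y \<and> E (insert a Y - {a})" E p]
    by (auto simp: subset_Diff_insert)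
  moreover have "Pr F p (\<lambda>Y. E (Y - {a})) = Pr (F - {a}) p E"
    using Pr_split[OF F a, of p "\<lambda>Y. E (Y - {a})"]
      Pr_cong[of "F - {a}" "\<lambda>Y. E (insert a Y - {a})" E p]
      Pr_cong[of "F - {a}" "\<lambda>Y. E (Y - {a})" E p]
    by (auto simp: subset_Diff_insert algebra_simps)
  ultimately show ?thesis by simp
qed

section \<open>Exploration complexes and d-trees\<close>

definition is_complex :: "nat set set \<Rightarrow> bool" where
  "is_complex K \<longleftrightarrow> (\<forall>f\<in>K. f \<noteq> {} \<and> (\<forall>g. g \<subseteq> f \<and> g \<noteq> {} \<longrightarrow> g \<in> K))"

definition attached :: "nat set set \<Rightarrow> nat \<Rightarrow> nat set set \<Rightarrow> nat set set" where
  "attached Y d K = {\<sigma>\<in>Y. \<exists>\<eta>\<in>K. card \<eta> = d \<and> \<eta> \<subseteq> \<sigma>}"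

lemma mem_gen_iff: "f \<in> gen F \<longleftrightarrow> f \<noteq> {} \<and> (\<exists>\<sigma>\<in>F. f \<subseteq> \<sigma>)"
  unfolding gen_def by simp

lemma Union_gen: "{} \<notin> F \<Longrightarrow> \<Union>(gen F) = \<Union>F"
  unfolding gen_def by blast

lemma is_complex_gen: "is_complex (gen F)"
  unfolding is_complex_def gen_def by blast

lemma is_complex_Un: "is_complex A \<Longrightarrow> is_complex B \<Longrightarrow> is_complex (A \<union> B)"
  unfolding is_complex_def by blast

lemma is_complexD:
  "is_complex K \<Longrightarrow> f \<in> K \<Longrightarrow> f \<noteq> {}"
  "is_complex K \<Longrightarrow> f \<in> K \<Longrightarrow> g \<subseteq> f \<Longrightarrow> g \<noteq> {} \<Longrightarrow> g \<in> K"
  unfolding is_complex_def by blast+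

lemma Un_gen_Diff: "is_complex K \<Longrightarrow> K \<union> gen A = K \<union> gen (A - K)"
  unfolding is_complex_def gen_def by blast

lemma S_Suc: "S Y d \<tau> (Suc i) = S Y d \<tau> i \<union> gen (attached Y d (S Y d \<tau> i))"
  by (simp add: attached_def)

declare S.simps(2) [simp del]

lemma is_complex_S: "is_complex (S Y d \<tau> i)"
  by (induction i) (simp_all add: S_Suc is_complex_gen is_complex_Un)

lemma S_mono: "i \<le> j \<Longrightarrow> S Y d \<tau> i \<subseteq> S Y d \<tau> j"
  by (induction j) (auto simp: le_Suc_eq S_Suc)

lemma S_mono_simplices: "Y \<subseteq> Y' \<Longrightarrow> S Y d \<tau> i \<subseteq> S Y' d \<tau> i"
proof (induction i)
  case (Suc i)
  then have "attached Y d (S Y d \<tau> i) \<subseteq> attached Y' d (S Y' d \<tau> i)"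
    unfolding attached_def by blast
  moreover have "gen A \<subseteq> gen A'" if "A \<subseteq> A'" for A A' using that unfolding gen_def by blast
  ultimately show ?case using Suc by (auto simp: S_Suc)
qed simp

lemma Union_S_subset: "\<Union>(S Y d \<tau> i) \<subseteq> \<tau> \<union> \<Union>Y"
proof -
  have "f \<subseteq> \<tau> \<or> (\<exists>\<sigma>\<in>Y. f \<subseteq> \<sigma>)" if "f \<in> S Y d \<tau> i" for f
    using that by (induction i) (auto simp: S_Suc mem_gen_iff attached_def)
  then show ?thesis by blast
qed

lemma S_Diff_singleton:
  assumes "\<sigma> \<notin> S Y d \<tau> j"
  shows "S (Y - {\<sigma>}) d \<tau> j = S Y d \<tau> j"
  using assms
proof (induction j)
  case (Suc j)
  have "\<sigma> \<notin> S Y d \<tau> j" using Suc.prems S_mono[of j "Suc j" Y d \<tau>] by auto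
  then have IH: "S (Y - {\<sigma>}) d \<tau> j = S Y d \<tau> j" by (rule Suc.IH)
  have "\<sigma> \<notin> attached Y d (S Y d \<tau> j)"
  proof
    assume \<sigma>: "\<sigma> \<in> attached Y d (S Y d \<tau> j)"
    then have "\<sigma> \<noteq> {}"
      unfolding attached_def using is_complexD(1)[OF is_complex_S] by blast
    then have "\<sigma> \<in> S Y d \<tau> (Suc j)" using \<sigma> by (auto simp: S_Suc mem_gen_iff)
    then show False using Suc.prems by blast
  qed
  then have "attached (Y - {\<sigma>}) d (S Y d \<tau> j) = attached Y d (S Y d \<tau> j)"
    unfolding attached_def by blast
  then show ?case using IH by (simp add: S_Suc)
qed simp

lemma is_dtree_simplex:
  assumes "d \<ge> 1" "finite \<tau>" "card \<tau> = d"
  shows "is_dtree d (gen {\<tau>})"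
proof -
  have "\<tau> \<noteq> {}" using assms by auto
  then have "\<Union>(gen {\<tau>}) = \<tau>" using Union_gen[of "{\<tau>}"] by auto
  then show ?thesis
    unfolding is_dtree_def using assms by (auto intro!: exI[of _ "sorted_list_of_set \<tau>"])
qed

lemma is_simplex_gen: "card \<eta> = Suc j \<Longrightarrow> is_simplex (gen {\<eta>}) j"
  unfolding is_simplex_def using card_ge_0_finite[of \<eta>] by (intro exI[of _ \<eta>]) simp

lemma induced_add_simplex:
  assumes T: "is_complex T" and \<eta>: "\<eta> \<in> T" and v: "v \<notin> \<Union>T" and Q: "Q \<subseteq> \<Union>T"
  shows "induced (T \<union> gen {insert v \<eta>}) Q = induced T Q"
proof -
  have "f \<in> T" if f: "f \<in> gen {insert v \<eta>}" "f \<subseteq> \<Union>T" for f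
  proof -
    have "f \<subseteq> \<eta>" "f \<noteq> {}" using f v by (auto simp: mem_gen_iff)
    then show ?thesis using is_complexD(2)[OF T \<eta>] by blast
  qed
  then show ?thesis using Q unfolding induced_def by blast
qed

lemma link_add_simplex:
  assumes T: "is_complex T" and \<eta>: "\<eta> \<in> T" and v: "v \<notin> \<Union>T"
  shows "link (induced (T \<union> gen {insert v \<eta>}) (insert v (\<Union>T))) v = gen {\<eta>}"
proof (rule set_eqI)
  fix g
  let ?T' = "T \<union> gen {insert v \<eta>}"
  have \<eta>_sub: "\<eta> \<subseteq> \<Union>T" using \<eta> by blast
  show "g \<in> link (induced ?T' (insert v (\<Union>T))) v \<longleftrightarrow> g \<in> gen {\<eta>}"
  proof
    assume "g \<in> link (induced ?T' (insert v (\<Union>T))) v"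
    then have g: "g \<in> ?T'" "v \<notin> g" "insert v g \<in> ?T'" unfolding link_def induced_def by auto
    have "insert v g \<notin> T" using v by blast
    then have "insert v g \<subseteq> insert v \<eta>" using g(3) by (auto simp: mem_gen_iff)
    moreover have "g \<noteq> {}"
      using g(1) is_complexD(1)[OF T] by (auto simp: mem_gen_iff)
    ultimately show "g \<in> gen {\<eta>}" using g(2) by (auto simp: mem_gen_iff)
  next
    assume "g \<in> gen {\<eta>}"
    then have g: "g \<noteq> {}" "g \<subseteq> \<eta>" by (auto simp: mem_gen_iff)
    then have "g \<in> T" using is_complexD(2)[OF T \<eta>] by blast
    moreover have "insert v g \<in> gen {insert v \<eta>}" using g by (auto simp: mem_gen_iff)
    moreover have "v \<notin> g" using g \<eta>_sub v by blast
    ultimately show "g \<in> link (induced ?T' (insert v (\<Union>T))) v"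
      using g \<eta>_sub unfolding link_def induced_def by auto
  qed
qed

text \<open>The new vertex v is appended to the vertex ordering; its link is the face \<eta>.\<close>

lemma is_dtree_add_simplex:
  assumes d: "d \<ge> 1" and T: "is_dtree d T" "is_complex T"
    and \<eta>: "\<eta> \<in> T" "card \<eta> = d" and v: "v \<notin> \<Union>T"
  shows "is_dtree d (T \<union> gen {insert v \<eta>})"
proof -
  define W where "W = \<Union>T"
  define T' where "T' = T \<union> gen {insert v \<eta>}"
  obtain vs where vs: "distinct vs" "set vs = W" "finite W" "card W \<ge> d"
    "\<And>i. d + 1 \<le> i \<Longrightarrow> i \<le> length vs \<Longrightarrow>
       is_simplex (link (induced T (set (take i vs))) (vs ! (i - 1))) (d - 1)"
    using T(1) unfolding is_dtree_def W_def by blast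
  have vW: "v \<notin> W" using v unfolding W_def .
  have "\<eta> \<subseteq> W" using \<eta>(1) unfolding W_def by blast
  then have UT': "\<Union>T' = insert v W" unfolding T'_def W_def by (auto simp: gen_def)
  have old_faces: "induced T' Q = induced T Q" if "Q \<subseteq> W" for Q
    using induced_add_simplex[OF T(2) \<eta>(1) v, folded W_def T'_def] that .
  have new_link: "link (induced T' (insert v W)) v = gen {\<eta>}"
    using link_add_simplex[OF T(2) \<eta>(1) v, folded W_def T'_def] .
  have \<eta>_simplex: "is_simplex (gen {\<eta>}) (d - 1)" using \<eta>(2) d by (intro is_simplex_gen) simp
  define vs' where "vs' = vs @ [v]"
  have links: "is_simplex (link (induced T' (set (take i vs'))) (vs' ! (i - 1))) (d - 1)"
    if i: "d + 1 \<le> i" "i \<le> length vs'" for i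
  proof (cases "i \<le> length vs")
    case True
    then have "take i vs' = take i vs" "vs' ! (i - 1) = vs ! (i - 1)"
      using i(1) d unfolding vs'_def by (auto simp: nth_append)
    moreover have "set (take i vs) \<subseteq> W" using vs(2) set_take_subset by metis
    ultimately show ?thesis using old_faces vs(5)[OF i(1) True] by simp
  next
    case False
    then have "i = length vs'" using i(2) unfolding vs'_def by simp
    then have "take i vs' = vs'" "vs' ! (i - 1) = v" unfolding vs'_def by simp_all
    moreover have "set vs' = insert v W" using vs(2) unfolding vs'_def by simp
    ultimately show ?thesis using new_link \<eta>_simplex by (simp only:)
  qed
  have "distinct vs'" "set vs' = \<Union>T'" using vs(1,2) vW UT' unfolding vs'_def by auto
  moreover have "finite (\<Union>T')" "card (\<Union>T') \<ge> d"
    using UT' vs(3,4) card_insert_le[of W v] by auto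
  ultimately show ?thesis unfolding is_dtree_def T'_def[symmetric] using links by blast
qed

lemma is_dtree_add_simplices:
  assumes d: "d \<ge> 1" and T: "is_dtree d T" "is_complex T" and N: "finite N"
    and card: "\<And>\<sigma>. \<sigma> \<in> N \<Longrightarrow> card \<sigma> = Suc d"
    and face: "\<And>\<sigma>. \<sigma> \<in> N \<Longrightarrow> \<exists>\<eta>\<in>T. card \<eta> = d \<and> \<eta> \<subseteq> \<sigma>"
    and fresh: "\<And>\<sigma>. \<sigma> \<in> N \<Longrightarrow> \<not> \<sigma> \<subseteq> \<Union>T \<union> \<Union>(N - {\<sigma>})"
  shows "is_dtree d (T \<union> gen N)"
  using N card face fresh
proof (induction N rule: finite_induct)
  case empty
  then show ?case using T(1) by (simp add: gen_def)
next
  case (insert \<sigma> N)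
  define T0 where "T0 = T \<union> gen N"
  have "is_dtree d T0"
    unfolding T0_def
  proof (rule insert.IH)
    fix \<sigma>' assume \<sigma>': "\<sigma>' \<in> N"
    then show "card \<sigma>' = Suc d" "\<exists>\<eta>\<in>T. card \<eta> = d \<and> \<eta> \<subseteq> \<sigma>'"
      using insert.prems(1,2) by simp_all
    have "\<Union>(N - {\<sigma>'}) \<subseteq> \<Union>(insert \<sigma> N - {\<sigma>'})" by blast
    then show "\<not> \<sigma>' \<subseteq> \<Union>T \<union> \<Union>(N - {\<sigma>'})" using insert.prems(3)[of \<sigma>'] \<sigma>' by blast
  qed
  moreover have "is_complex T0" unfolding T0_def using T(2) by (simp add: is_complex_Un is_complex_gen)
  moreover obtain \<eta> where \<eta>: "\<eta> \<in> T" "card \<eta> = d" "\<eta> \<subseteq> \<sigma>" using insert.prems(2) by blast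
  moreover obtain v where v: "v \<in> \<sigma>" "v \<notin> \<Union>T0"
  proof -
    have "{} \<notin> N" using insert.prems(1) by force
    then have "\<Union>T0 = \<Union>T \<union> \<Union>N" unfolding T0_def using Union_gen by auto
    moreover have "\<not> \<sigma> \<subseteq> \<Union>T \<union> \<Union>N" using insert.prems(3)[of \<sigma>] insert.hyps(2) by simp
    ultimately show thesis using that by blast
  qed
  moreover have "\<sigma> = insert v \<eta>"
  proof -
    have "v \<notin> \<eta>" using v \<eta>(1) unfolding T0_def by blast
    moreover have "finite \<eta>" using \<eta>(2) d by (intro card_ge_0_finite) simp
    ultimately have "card (insert v \<eta>) = card \<sigma>" using \<eta>(2) insert.prems(1)[of \<sigma>] by simp
    moreover have "finite \<sigma>" using insert.prems(1)[of \<sigma>] by (intro card_ge_0_finite) simp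
    ultimately show ?thesis using card_subset_eq[of \<sigma> "insert v \<eta>"] v \<eta>(3) by auto
  qed
  ultimately have "is_dtree d (T0 \<union> gen {\<sigma>})" using is_dtree_add_simplex[OF d] unfolding T0_def by blast
  moreover have "T \<union> gen (insert \<sigma> N) = T0 \<union> gen {\<sigma>}" unfolding T0_def gen_def by blast
  ultimately show ?case by simp
qed

lemma is_dtree_S:
  assumes d: "d \<ge> 1" and \<tau>: "finite \<tau>" "card \<tau> = d"
    and Y: "finite Y" "\<And>\<sigma>. \<sigma> \<in> Y \<Longrightarrow> card \<sigma> = Suc d"
    and fresh: "\<And>\<sigma>. \<sigma> \<in> Y \<Longrightarrow> \<not> \<sigma> \<subseteq> \<Union>(S (Y - {\<sigma>}) d \<tau> m)"
  shows "j \<le> m \<Longrightarrow> is_dtree d (S Y d \<tau> j)"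
proof (induction j)
  case 0
  then show ?case using is_dtree_simplex[OF d \<tau>] by simp
next
  case (Suc j)
  define K where "K = S Y d \<tau> j"
  define N where "N = attached Y d K - K"
  have "S Y d \<tau> (Suc j) = K \<union> gen N"
    unfolding K_def N_def S_Suc by (rule Un_gen_Diff[OF is_complex_S])
  moreover have "is_dtree d (K \<union> gen N)"
  proof (rule is_dtree_add_simplices[OF d])
    show "is_dtree d K" "is_complex K" using Suc unfolding K_def by (simp_all add: is_complex_S)
    show "finite N" using Y(1) unfolding N_def attached_def by simp
    fix \<sigma> assume \<sigma>: "\<sigma> \<in> N"
    then show "card \<sigma> = Suc d" "\<exists>\<eta>\<in>K. card \<eta> = d \<and> \<eta> \<subseteq> \<sigma>"
      using Y(2) unfolding N_def attached_def by auto
    have K_eq: "S (Y - {\<sigma>}) d \<tau> j = K"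
      using \<sigma> S_Diff_singleton unfolding N_def K_def by blast
    have "N - {\<sigma>} \<subseteq> S (Y - {\<sigma>}) d \<tau> (Suc j)"
    proof
      fix \<sigma>' assume "\<sigma>' \<in> N - {\<sigma>}"
      moreover have "\<sigma>' \<noteq> {}" if "\<sigma>' \<in> N" using Y(2) that unfolding N_def attached_def by force
      ultimately show "\<sigma>' \<in> S (Y - {\<sigma>}) d \<tau> (Suc j)"
        unfolding S_Suc K_eq N_def attached_def by (auto simp: mem_gen_iff)
    qed
    then have "\<Union>K \<union> \<Union>(N - {\<sigma>}) \<subseteq> \<Union>(S (Y - {\<sigma>}) d \<tau> m)"
      using K_eq S_mono[of j m "Y - {\<sigma>}" d \<tau>] S_mono[of "Suc j" m "Y - {\<sigma>}" d \<tau>] Suc.prems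
      by auto
    then show "\<not> \<sigma> \<subseteq> \<Union>K \<union> \<Union>(N - {\<sigma>})"
      using fresh[of \<sigma>] \<sigma> unfolding N_def attached_def by blast
  qed
  ultimately show ?case by simp
qed

section \<open>Size of the explored complex\<close>

definition degree_bounded :: "nat \<Rightarrow> nat \<Rightarrow> real \<Rightarrow> nat set set \<Rightarrow> bool" where
  "degree_bounded n d r Y \<longleftrightarrow> (\<forall>\<eta>\<in>faces n (d - 1). real (card {\<sigma>\<in>Y. \<eta> \<subseteq> \<sigma>}) \<le> r)"

lemma faces_subset: "\<sigma> \<in> faces n j \<Longrightarrow> \<sigma> \<subseteq> {0..<n}"
  unfolding faces_def by auto

lemma card_faces_mem: "\<sigma> \<in> faces n j \<Longrightarrow> card \<sigma> = Suc j"
  unfolding faces_def by auto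

lemma finite_faces: "finite (faces n j)"
  unfolding faces_def by (rule finite_subset[of _ "Pow {0..<n}"]) auto

lemma card_subsets_le_pow: "finite V \<Longrightarrow> card {\<sigma>. \<sigma> \<subseteq> V \<and> card \<sigma> = k} \<le> card V ^ k"
  by (cases "k \<le> card V") (simp_all add: n_subsets binomial_le_pow binomial_eq_0)

lemma card_faces_le: "card (faces n j) \<le> n ^ Suc j"
  unfolding faces_def using card_subsets_le_pow[of "{0..<n}" "Suc j"] by simp

lemma degree_bounded_Diff:
  assumes "degree_bounded n d r Y" "finite Y"
  shows "degree_bounded n d r (Y - {\<sigma>})"
  unfolding degree_bounded_def
proof
  fix \<eta> assume "\<eta> \<in> faces n (d - 1)"
  moreover have "card {\<rho>\<in>Y - {\<sigma>}. \<eta> \<subseteq> \<rho>} \<le> card {\<rho>\<in>Y. \<eta> \<subseteq> \<rho>}"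
    using assms(2) by (intro card_mono) auto
  ultimately show "real (card {\<rho>\<in>Y - {\<sigma>}. \<eta> \<subseteq> \<rho>}) \<le> r"
    using assms(1) unfolding degree_bounded_def by (meson of_nat_le_iff order_trans)
qed

lemma degree_bounded_of_Diff:
  assumes "degree_bounded n d r (Y - {\<sigma>})" "finite Y"
  shows "degree_bounded n d (r + 1) Y"
  unfolding degree_bounded_def
proof
  fix \<eta> assume "\<eta> \<in> faces n (d - 1)"
  have "card {\<rho>\<in>Y. \<eta> \<subseteq> \<rho>} \<le> card (insert \<sigma> {\<rho>\<in>Y - {\<sigma>}. \<eta> \<subseteq> \<rho>})"
    using assms(2) by (intro card_mono) auto
  also have "\<dots> \<le> Suc (card {\<rho>\<in>Y - {\<sigma>}. \<eta> \<subseteq> \<rho>})" using assms(2) by (simp add: card_insert_if)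
  finally show "real (card {\<rho>\<in>Y. \<eta> \<subseteq> \<rho>}) \<le> r + 1"
    using assms(1) \<open>\<eta> \<in> faces n (d - 1)\<close> unfolding degree_bounded_def by fastforce
qed

text \<open>A bound on the number of vertices of S_j when all codegrees are at most r: S_(j+1)
  adds at most |V(S_j)|^d * r d-simplices to S_j, each with at most d+1 vertices.\<close>

fun vertex_bound :: "nat \<Rightarrow> nat \<Rightarrow> real \<Rightarrow> real" where
  "vertex_bound d 0 r = real d"
| "vertex_bound d (Suc j) r = vertex_bound d j r + real (Suc d) * vertex_bound d j r ^ d * r"

lemma vertex_bound_nonneg: "0 \<le> r \<Longrightarrow> 0 \<le> vertex_bound d j r"
  by (induction j) auto

lemma card_attached_le:
  assumes Y: "finite Y" and W: "finite W" "\<Union>K \<subseteq> W" and r: "0 \<le> r"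
    and deg: "\<And>\<eta>. \<eta> \<subseteq> W \<Longrightarrow> card \<eta> = d \<Longrightarrow> real (card {\<sigma>\<in>Y. \<eta> \<subseteq> \<sigma>}) \<le> r"
  shows "real (card (attached Y d K)) \<le> real (card W) ^ d * r"
proof -
  define H where "H = {\<eta>. \<eta> \<subseteq> W \<and> card \<eta> = d}"
  have H: "finite H" "card H \<le> card W ^ d"
    unfolding H_def using W card_subsets_le_pow[of W d] by (auto intro: finite_subset[of _ "Pow W"])
  have "attached Y d K \<subseteq> (\<Union>\<eta>\<in>H. {\<sigma>\<in>Y. \<eta> \<subseteq> \<sigma>})"
    unfolding attached_def H_def using W(2) by blast
  then have "card (attached Y d K) \<le> card (\<Union>\<eta>\<in>H. {\<sigma>\<in>Y. \<eta> \<subseteq> \<sigma>})"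
    using Y by (intro card_mono) (auto intro: finite_subset[of _ Y])
  also have "\<dots> \<le> (\<Sum>\<eta>\<in>H. card {\<sigma>\<in>Y. \<eta> \<subseteq> \<sigma>})" by (rule card_UN_le[OF H(1)])
  finally have "real (card (attached Y d K)) \<le> (\<Sum>\<eta>\<in>H. real (card {\<sigma>\<in>Y. \<eta> \<subseteq> \<sigma>}))"
    by (metis of_nat_le_iff of_nat_sum)
  also have "\<dots> \<le> real (card H) * r"
    using sum_mono[of H "\<lambda>\<eta>. real (card {\<sigma>\<in>Y. \<eta> \<subseteq> \<sigma>})" "\<lambda>_. r"] deg unfolding H_def by simp
  also have "\<dots> \<le> real (card W) ^ d * r"
    using H(2) r by (intro mult_right_mono) (simp_all flip: of_nat_power)
  finally show ?thesis .
qed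

lemma Union_S_subset_vertices:
  "\<tau> \<subseteq> {0..<n} \<Longrightarrow> Y \<subseteq> faces n d \<Longrightarrow> \<Union>(S Y d \<tau> j) \<subseteq> {0..<n}"
  using Union_S_subset[of Y d \<tau> j] faces_subset by blast

lemma card_Union_S_le:
  assumes \<tau>: "\<tau> \<in> faces n (d - 1)" and Y: "Y \<subseteq> faces n d" and d: "d \<ge> 1"
    and r: "0 \<le> r" and deg: "degree_bounded n d r Y"
  shows "real (card (\<Union>(S Y d \<tau> j))) \<le> vertex_bound d j r"
proof (induction j)
  case 0
  have "\<Union>(gen {\<tau>}) \<subseteq> \<tau>" by (auto simp: gen_def)
  then have "card (\<Union>(gen {\<tau>})) \<le> card \<tau>"
    using faces_subset[OF \<tau>] by (intro card_mono) (auto intro: finite_subset)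
  then show ?case using card_faces_mem[OF \<tau>] d by simp
next
  case (Suc j)
  define W where "W = \<Union>(S Y d \<tau> j)"
  define A where "A = attached Y d (S Y d \<tau> j)"
  have Y_fin: "finite Y" using Y finite_faces finite_subset by blast
  have W_vertices: "W \<subseteq> {0..<n}"
    unfolding W_def using Union_S_subset_vertices[OF faces_subset[OF \<tau>] Y] .
  then have W_fin: "finite W" by (rule finite_subset) simp
  have A_card: "card \<sigma> = Suc d" if "\<sigma> \<in> A" for \<sigma>
    using that Y card_faces_mem unfolding A_def attached_def by blast
  have "{} \<notin> A" using A_card by force
  then have "\<Union>(S Y d \<tau> (Suc j)) = W \<union> \<Union>A"
    unfolding W_def A_def S_Suc using Union_gen by auto
  moreover have "card (\<Union>A) \<le> Suc d * card A"
    using card_Union_le_sum_card[of A] A_card by (simp add: mult.commute)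
  ultimately have "card (\<Union>(S Y d \<tau> (Suc j))) \<le> card W + Suc d * card A"
    using card_Un_le[of W "\<Union>A"] by simp
  then have "real (card (\<Union>(S Y d \<tau> (Suc j)))) \<le> real (card W + Suc d * card A)"
    by (rule of_nat_mono)
  also have "\<dots> = real (card W) + real (Suc d) * real (card A)" by (simp add: algebra_simps)
  also have "\<dots> \<le> vertex_bound d j r + real (Suc d) * (vertex_bound d j r ^ d * r)"
  proof (intro add_mono mult_left_mono)
    show W_le: "real (card W) \<le> vertex_bound d j r" using Suc unfolding W_def .
    have "real (card A) \<le> real (card W) ^ d * r"
      unfolding A_def
    proof (rule card_attached_le[OF Y_fin W_fin _ r])
      fix \<eta> assume "\<eta> \<subseteq> W" "card \<eta> = d"
      then have "\<eta> \<in> faces n (d - 1)" using W_vertices d unfolding faces_def by auto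
      then show "real (card {\<sigma>\<in>Y. \<eta> \<subseteq> \<sigma>}) \<le> r" using deg unfolding degree_bounded_def by blast
    qed (simp add: W_def)
    also have "\<dots> \<le> vertex_bound d j r ^ d * r"
      using W_le r by (intro mult_right_mono power_mono) simp_all
    finally show "real (card A) \<le> vertex_bound d j r ^ d * r" .
  qed simp
  finally show ?case by (simp add: mult.assoc)
qed

section \<open>Probability of the bad events\<close>

lemma card_cofaces_le:
  assumes \<eta>: "\<eta> \<in> faces n (d - 1)" and d: "d \<ge> 1"
  shows "card {\<sigma>\<in>faces n d. \<eta> \<subseteq> \<sigma>} \<le> n"
proof -
  have \<eta>_card: "card \<eta> = d" "finite \<eta>"
    using card_faces_mem[OF \<eta>] faces_subset[OF \<eta>] d finite_subset by auto
  have "{\<sigma>\<in>faces n d. \<eta> \<subseteq> \<sigma>} \<subseteq> (\<lambda>v. insert v \<eta>) ` {0..<n}"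
  proof
    fix \<sigma> assume \<sigma>: "\<sigma> \<in> {\<sigma>\<in>faces n d. \<eta> \<subseteq> \<sigma>}"
    then have \<sigma>_props: "card \<sigma> = Suc d" "\<eta> \<subseteq> \<sigma>" "\<sigma> \<subseteq> {0..<n}"
      using card_faces_mem[of \<sigma> n d] faces_subset[of \<sigma> n d] by auto
    have "finite \<sigma>" using \<sigma>_props(3) by (rule finite_subset) simp
    have "\<not> \<sigma> \<subseteq> \<eta>" using card_mono[OF \<eta>_card(2), of \<sigma>] \<sigma>_props(1) \<eta>_card(1) by auto
    then obtain v where v: "v \<in> \<sigma>" "v \<notin> \<eta>" by blast
    then have "insert v \<eta> = \<sigma>"
      using \<sigma>_props \<eta>_card \<open>finite \<sigma>\<close> by (intro card_subset_eq) auto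
    then show "\<sigma> \<in> (\<lambda>v. insert v \<eta>) ` {0..<n}" using v \<sigma>_props by auto
  qed
  then have "card {\<sigma>\<in>faces n d. \<eta> \<subseteq> \<sigma>} \<le> card ((\<lambda>v. insert v \<eta>) ` {0..<n})"
    by (intro card_mono) simp_all
  also have "\<dots> \<le> n" using card_image_le[of "{0..<n}" "\<lambda>v. insert v \<eta>"] by simp
  finally show ?thesis .
qed

lemma Pr_codegree_ge:
  assumes \<eta>: "\<eta> \<in> faces n (d - 1)" and d: "d \<ge> 1" and p: "0 \<le> p" "p \<le> 1"
  shows "Pr (faces n d) p (\<lambda>Y. m \<le> card {\<sigma>\<in>Y. \<eta> \<subseteq> \<sigma>}) \<le> real n ^ m / fact m * p ^ m"
proof -
  define C where "C = {\<sigma>\<in>faces n d. \<eta> \<subseteq> \<sigma>}"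
  define X where "X = {A. A \<subseteq> C \<and> card A = m}"
  have C_fin: "finite C" unfolding C_def using finite_faces by simp
  have "X \<subseteq> Pow C" unfolding X_def by blast
  then have X_fin: "finite X" using C_fin finite_subset by blast
  have "Pr (faces n d) p (\<lambda>Y. m \<le> card {\<sigma>\<in>Y. \<eta> \<subseteq> \<sigma>}) \<le> Pr (faces n d) p (\<lambda>Y. \<exists>A\<in>X. A \<subseteq> Y)"
  proof (rule Pr_mono[OF finite_faces p])
    fix Y assume Y: "Y \<subseteq> faces n d" and m: "m \<le> card {\<sigma>\<in>Y. \<eta> \<subseteq> \<sigma>}"
    obtain A where A: "A \<subseteq> {\<sigma>\<in>Y. \<eta> \<subseteq> \<sigma>}" "card A = m"
      using obtain_subset_with_card_n[OF m] by blast
    then have "A \<in> X" unfolding X_def C_def using Y by auto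
    then show "\<exists>A\<in>X. A \<subseteq> Y" using A(1) by blast
  qed
  also have "\<dots> \<le> (\<Sum>A\<in>X. Pr (faces n d) p (\<lambda>Y. A \<subseteq> Y))"
    by (rule Pr_union_bound[OF finite_faces X_fin p])
  also have "\<dots> = (\<Sum>A\<in>X. p ^ m)"
  proof (rule sum.cong[OF refl])
    fix A assume "A \<in> X"
    then show "Pr (faces n d) p (\<lambda>Y. A \<subseteq> Y) = p ^ m"
      using Pr_superset[OF finite_faces, of A] unfolding X_def C_def by auto
  qed
  also have "\<dots> = real (card C choose m) * p ^ m"
    using n_subsets[OF C_fin, of m] unfolding X_def by simp
  also have "\<dots> \<le> real n ^ m / fact m * p ^ m"
  proof (rule mult_right_mono[OF _ zero_le_power[OF p(1)]])
    have "(card C choose m) * fact m \<le> card C ^ m" by (rule binomial_fact_pow)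
    also have "\<dots> \<le> n ^ m" using card_cofaces_le[OF \<eta> d] unfolding C_def by (simp add: power_mono)
    finally have "real (card C choose m) * fact m \<le> real n ^ m"
      by (metis of_nat_fact of_nat_le_iff of_nat_mult of_nat_power)
    then show "real (card C choose m) \<le> real n ^ m / fact m" by (simp add: field_simps)
  qed
  finally show ?thesis .
qed

lemma Pr_not_degree_bounded:
  assumes d: "d \<ge> 1" and p: "0 \<le> p" "p \<le> 1" and r: "0 \<le> r"
  defines "m \<equiv> nat \<lfloor>r\<rfloor> + 1"
  shows "Pr (faces n d) p (\<lambda>Y. \<not> degree_bounded n d r Y) \<le> real n ^ d * (real n ^ m / fact m * p ^ m)"
proof -
  have "Pr (faces n d) p (\<lambda>Y. \<not> degree_bounded n d r Y)
      \<le> Pr (faces n d) p (\<lambda>Y. \<exists>\<eta>\<in>faces n (d - 1). m \<le> card {\<sigma>\<in>Y. \<eta> \<subseteq> \<sigma>})"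
  proof (rule Pr_mono[OF finite_faces p])
    fix Y assume "\<not> degree_bounded n d r Y"
    then obtain \<eta> where "\<eta> \<in> faces n (d - 1)" "r < real (card {\<sigma>\<in>Y. \<eta> \<subseteq> \<sigma>})"
      unfolding degree_bounded_def by force
    moreover have "r < real k \<Longrightarrow> m \<le> k" for k unfolding m_def using r by linarith
    ultimately show "\<exists>\<eta>\<in>faces n (d - 1). m \<le> card {\<sigma>\<in>Y. \<eta> \<subseteq> \<sigma>}" by blast
  qed
  also have "\<dots> \<le> (\<Sum>\<eta>\<in>faces n (d - 1). Pr (faces n d) p (\<lambda>Y. m \<le> card {\<sigma>\<in>Y. \<eta> \<subseteq> \<sigma>}))"
    by (rule Pr_union_bound[OF finite_faces finite_faces p])
  also have "\<dots> \<le> (\<Sum>\<eta>\<in>faces n (d - 1). real n ^ m / fact m * p ^ m)"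
    by (rule sum_mono, rule Pr_codegree_ge[OF _ d p])
  also have "\<dots> = real (card (faces n (d - 1))) * (real n ^ m / fact m * p ^ m)" by simp
  also have "\<dots> \<le> real n ^ d * (real n ^ m / fact m * p ^ m)"
  proof (rule mult_right_mono)
    show "real (card (faces n (d - 1))) \<le> real n ^ d"
      using card_faces_le[of n "d - 1"] d by (simp flip: of_nat_power)
  qed (use p in simp)
  finally show ?thesis .
qed

lemma card_covered_simplices_le:
  assumes \<tau>: "\<tau> \<in> faces n (d - 1)" and Y: "Y \<subseteq> faces n d" and d: "d \<ge> 1" and r: "0 \<le> r"
  shows "real (card {\<sigma>\<in>faces n d. degree_bounded n d r (Y - {\<sigma>}) \<and> \<sigma> \<subseteq> \<Union>(S (Y - {\<sigma>}) d \<tau> m)})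
           \<le> vertex_bound d m (r + 1) ^ Suc d"
    (is "real (card ?C) \<le> _")
proof (cases "?C = {}")
  case True
  show ?thesis unfolding True using vertex_bound_nonneg[of "r + 1"] r by simp
next
  case False
  then obtain \<sigma>0 where "degree_bounded n d r (Y - {\<sigma>0})" by blast
  moreover have "finite Y" using finite_subset[OF Y finite_faces] .
  ultimately have deg: "degree_bounded n d (r + 1) Y" by (rule degree_bounded_of_Diff)
  define V where "V = \<Union>(S Y d \<tau> m)"
  have "V \<subseteq> {0..<n}" unfolding V_def by (rule Union_S_subset_vertices[OF faces_subset[OF \<tau>] Y])
  then have V_fin: "finite V" by (meson finite_atLeastLessThan finite_subset)
  have "?C \<subseteq> {\<sigma>. \<sigma> \<subseteq> V \<and> card \<sigma> = Suc d}"
  proof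
    fix \<sigma> assume "\<sigma> \<in> ?C"
    moreover have "S (Y - {\<sigma>}) d \<tau> m \<subseteq> S Y d \<tau> m" by (rule S_mono_simplices) blast
    ultimately show "\<sigma> \<in> {\<sigma>. \<sigma> \<subseteq> V \<and> card \<sigma> = Suc d}"
      using card_faces_mem[of \<sigma> n d] unfolding V_def by blast
  qed
  moreover have "finite {\<sigma>. \<sigma> \<subseteq> V \<and> card \<sigma> = Suc d}"
    using V_fin by (simp add: finite_subset[of _ "Pow V"])
  ultimately have "card ?C \<le> card {\<sigma>. \<sigma> \<subseteq> V \<and> card \<sigma> = Suc d}"
    by (rule card_mono[rotated])
  then have "card ?C \<le> card V ^ Suc d" using card_subsets_le_pow[OF V_fin] by (rule le_trans)
  then have "real (card ?C) \<le> real (card V ^ Suc d)" by (rule of_nat_mono)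
  also have "\<dots> = real (card V) ^ Suc d" by simp
  also have "\<dots> \<le> vertex_bound d m (r + 1) ^ Suc d"
    unfolding V_def using card_Union_S_le[OF \<tau> Y d _ deg] r by (intro power_mono) simp_all
  finally show ?thesis .
qed

lemma Pr_degree_bounded_not_dtree:
  assumes d: "d \<ge> 1" and \<tau>: "\<tau> \<in> faces n (d - 1)" and p: "0 \<le> p" "p \<le> 1" and r: "0 \<le> r"
  shows "Pr (faces n d) p (\<lambda>Y. degree_bounded n d r Y \<and> \<not> is_dtree d (S Y d \<tau> m))
     \<le> p * vertex_bound d m (r + 1) ^ Suc d"
proof -
  define F where "F = faces n d"
  define covered where "covered \<sigma> Z \<longleftrightarrow> degree_bounded n d r Z \<and> \<sigma> \<subseteq> \<Union>(S Z d \<tau> m)" for \<sigma> Z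
  have F_fin: "finite F" unfolding F_def by (rule finite_faces)
  have \<tau>_props: "finite \<tau>" "card \<tau> = d"
    using card_faces_mem[OF \<tau>] finite_subset[OF faces_subset[OF \<tau>]] d by auto
  have "Pr F p (\<lambda>Y. degree_bounded n d r Y \<and> \<not> is_dtree d (S Y d \<tau> m))
      \<le> Pr F p (\<lambda>Y. \<exists>\<sigma>\<in>F. \<sigma> \<in> Y \<and> covered \<sigma> (Y - {\<sigma>}))"
  proof (rule Pr_mono[OF F_fin p])
    fix Y assume Y: "Y \<subseteq> F" and bad: "degree_bounded n d r Y \<and> \<not> is_dtree d (S Y d \<tau> m)"
    have Y_fin: "finite Y" using Y F_fin finite_subset by blast
    have "\<exists>\<sigma>\<in>Y. \<sigma> \<subseteq> \<Union>(S (Y - {\<sigma>}) d \<tau> m)"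
      using is_dtree_S[OF d \<tau>_props Y_fin, of m m] Y card_faces_mem bad unfolding F_def by blast
    then show "\<exists>\<sigma>\<in>F. \<sigma> \<in> Y \<and> covered \<sigma> (Y - {\<sigma>})"
      using Y bad degree_bounded_Diff[OF _ Y_fin] unfolding covered_def by blast
  qed
  also have "\<dots> \<le> (\<Sum>\<sigma>\<in>F. Pr F p (\<lambda>Y. \<sigma> \<in> Y \<and> covered \<sigma> (Y - {\<sigma>})))"
    by (rule Pr_union_bound[OF F_fin F_fin p])
  also have "\<dots> = p * (\<Sum>\<sigma>\<in>F. Pr F p (\<lambda>Y. covered \<sigma> (Y - {\<sigma>})))"
    by (simp add: Pr_mem_and_remove[OF F_fin] sum_distrib_left)
  also have "\<dots> \<le> p * vertex_bound d m (r + 1) ^ Suc d"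
    using card_covered_simplices_le[OF \<tau> _ d r]
    by (intro mult_left_mono[OF sum_Pr_le[OF F_fin F_fin p]] p) (auto simp: F_def covered_def)
  finally show ?thesis unfolding F_def .
qed

lemma Pr_dtree_and_degree_bounded_ge:
  assumes d: "d \<ge> 1" and \<tau>: "\<tau> \<in> faces n (d - 1)" and p: "0 \<le> p" "p \<le> 1" and r: "0 \<le> r"
  defines "M \<equiv> nat \<lfloor>r\<rfloor> + 1"
  shows "1 - (real n ^ d * (real n ^ M / fact M * p ^ M) + p * vertex_bound d m (r + 1) ^ Suc d)
     \<le> Pr (faces n d) p (\<lambda>Y. is_dtree d (S Y d \<tau> m) \<and> degree_bounded n d r Y)"
proof -
  let ?T = "\<lambda>Y. is_dtree d (S Y d \<tau> m)" and ?D = "degree_bounded n d r"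
  have "Pr (faces n d) p (\<lambda>Y. \<not> (?T Y \<and> ?D Y)) \<le> Pr (faces n d) p (\<lambda>Y. \<not> ?D Y \<or> (?D Y \<and> \<not> ?T Y))"
    by (rule Pr_mono[OF finite_faces p]) blast
  also have "\<dots> \<le> Pr (faces n d) p (\<lambda>Y. \<not> ?D Y) + Pr (faces n d) p (\<lambda>Y. ?D Y \<and> \<not> ?T Y)"
    by (rule Pr_disj_le[OF finite_faces p])
  also have "\<dots> \<le> real n ^ d * (real n ^ M / fact M * p ^ M) + p * vertex_bound d m (r + 1) ^ Suc d"
    unfolding M_def
    by (intro add_mono Pr_not_degree_bounded Pr_degree_bounded_not_dtree d \<tau> p r)
  finally show ?thesis using Pr_compl[OF finite_faces[of n d], where p = p and E = "\<lambda>Y. ?T Y \<and> ?D Y"] by linarith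
qed

section \<open>Asymptotics\<close>

lemma pow_div_fact_le_exp:
  fixes x :: real
  assumes "0 \<le> x"
  shows "x ^ m / fact m \<le> exp x"
proof -
  have s: "(\<lambda>n. x ^ n /\<^sub>R fact n) sums exp x" by (rule exp_converges)
  have "(\<Sum>n\<in>{m}. x ^ n /\<^sub>R fact n) \<le> (\<Sum>n. x ^ n /\<^sub>R fact n)"
    by (rule sum_le_suminf) (use s assms in \<open>auto simp: sums_iff\<close>)
  then show ?thesis using s by (simp add: sums_iff divide_inverse mult.commute)
qed

text \<open>With m = \<lfloor>ln n\<rfloor> + 1 we have c^m/m! \<le> (e c/m)^m \<le> n^-(d+1) once ln n \<ge> c e^(d+2).\<close>

lemma tendsto_degree_tail_bound:
  assumes c: "c > 0"
  shows "(\<lambda>n. real n ^ d * (real n ^ (nat \<lfloor>ln (real n)\<rfloor> + 1) / fact (nat \<lfloor>ln (real n)\<rfloor> + 1)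
             * (c / real n) ^ (nat \<lfloor>ln (real n)\<rfloor> + 1))) \<longlonglongrightarrow> 0"
    (is "(\<lambda>n. ?a n) \<longlonglongrightarrow> 0")
proof (rule tendsto_sandwich[OF _ _ tendsto_const lim_inverse_n])
  show "eventually (\<lambda>n. 0 \<le> ?a n) sequentially" using c by simp
  have "filterlim (\<lambda>n. ln (real n)) at_top sequentially"
    by (rule filterlim_compose[OF ln_at_top filterlim_real_sequentially])
  then have "eventually (\<lambda>n. c * exp (real d + 2) \<le> ln (real n)) sequentially"
    unfolding filterlim_at_top by blast
  then show "eventually (\<lambda>n. ?a n \<le> inverse (real n)) sequentially"
    using eventually_ge_at_top[of 1]
  proof eventually_elim
    case (elim n)
    define L where "L = ln (real n)"
    define m where "m = nat \<lfloor>L\<rfloor> + 1"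
    have n: "real n \<ge> 1" using elim by simp
    have "0 \<le> L" unfolding L_def using n by simp
    then have L: "c * exp (real d + 2) \<le> L" "L \<le> real m" "0 < real m"
      using elim unfolding L_def m_def by linarith+
    have "c ^ m / fact m = (c / m) ^ m * (real m ^ m / fact m)"
      using L(3) by (simp add: power_divide)
    also have "\<dots> \<le> (c / m) ^ m * exp 1 ^ m"
      using pow_div_fact_le_exp[of "real m" m] exp_of_nat_mult[of m "1::real"] c by (intro mult_left_mono) simp_all
    also have "\<dots> = (c * exp 1 / m) ^ m" by (simp add: power_mult_distrib power_divide)
    also have "\<dots> \<le> exp (- (real d + 1)) ^ m"
    proof (rule power_mono)
      have "c * exp 1 / m \<le> c * exp 1 / (c * exp (real d + 2))"
        using L c by (intro divide_left_mono) auto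
      also have "\<dots> = exp (- (real d + 1))" using c by (simp add: exp_diff[symmetric])
      finally show "c * exp 1 / m \<le> exp (- (real d + 1))" .
    qed (use c in simp)
    also have "\<dots> = exp (real m * (- (real d + 1)))" by (rule exp_of_nat_mult[symmetric])
    also have "\<dots> \<le> exp (L * (- (real d + 1)))"
      using L(2) by (intro exp_mono) (simp add: mult_right_mono_neg)
    also have "L * (- (real d + 1)) = - (real (Suc d) * L)" by (simp add: algebra_simps)
    also have "exp (- (real (Suc d) * L)) = inverse (exp L ^ Suc d)"
      by (simp only: exp_minus exp_of_nat_mult)
    also have "exp L = real n" unfolding L_def using n by simp
    finally have "c ^ m / fact m \<le> inverse (real n ^ Suc d)" .
    have "real n ^ m * (c / real n) ^ m = c ^ m" using n by (simp flip: power_mult_distrib)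
    then have "?a n = real n ^ d * (c ^ m / fact m)" unfolding m_def L_def by (simp add: field_simps)
    also have "\<dots> \<le> real n ^ d * inverse (real n ^ Suc d)"
      using \<open>c ^ m / fact m \<le> _\<close> by (intro mult_left_mono) simp_all
    also have "\<dots> = inverse (real n)" using n by (simp add: field_simps)
    finally show ?case .
  qed
qed

lemma vertex_bound_le_poly: "\<exists>C e. 0 \<le> C \<and> (\<forall>r\<ge>0. vertex_bound d j r \<le> C * (r + 1) ^ e)"
proof (induction j)
  case 0
  show ?case by (rule exI[of _ "real d"], rule exI[of _ 0]) simp
next
  case (Suc j)
  then obtain C e where C: "0 \<le> C" "\<And>r. r \<ge> 0 \<Longrightarrow> vertex_bound d j r \<le> C * (r + 1) ^ e" by blast
  define e' where "e' = d * e + e + 1"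
  have "vertex_bound d (Suc j) r \<le> (C + real (Suc d) * C ^ d) * (r + 1) ^ e'" if r: "r \<ge> 0" for r
  proof -
    define y where "y = r + 1"
    have y: "1 \<le> y" "r \<le> y" using r unfolding y_def by simp_all
    have V: "0 \<le> vertex_bound d j r" "vertex_bound d j r \<le> C * y ^ e"
      using vertex_bound_nonneg r C(2)[OF r] unfolding y_def by auto
    have "vertex_bound d j r \<le> C * y ^ e'"
      using V(2) C(1) y(1) unfolding e'_def
      by (meson order_trans mult_left_mono power_increasing le_add2 le_add1)
    moreover have "vertex_bound d j r ^ d * r \<le> C ^ d * y ^ e'"
    proof -
      have "vertex_bound d j r ^ d * r \<le> (C * y ^ e) ^ d * y"
        using V y r by (intro mult_mono power_mono) auto
      also have "\<dots> = C ^ d * y ^ (e * d + 1)" by (simp add: power_mult_distrib power_mult)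
      also have "\<dots> \<le> C ^ d * y ^ e'"
        using y C(1) unfolding e'_def by (intro mult_left_mono power_increasing) auto
      finally show ?thesis .
    qed
    then have "vertex_bound d j r + real (Suc d) * (vertex_bound d j r ^ d * r)
        \<le> C * y ^ e' + real (Suc d) * (C ^ d * y ^ e')"
      using calculation by (intro add_mono mult_left_mono) auto
    then show ?thesis unfolding y_def by (simp add: algebra_simps)
  qed
  moreover have "0 \<le> C + real (Suc d) * C ^ d" using C(1) by simp
  ultimately show ?case by blast
qed

lemma tendsto_nontree_bound:
  assumes c: "c > 0"
  shows "(\<lambda>n. c / real n * vertex_bound d j (ln (real n) + 1) ^ Suc d) \<longlonglongrightarrow> 0"
proof -
  obtain C e where C: "0 \<le> C" "\<And>r. r \<ge> 0 \<Longrightarrow> vertex_bound d j r \<le> C * (r + 1) ^ e"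
    using vertex_bound_le_poly by blast
  define E where "E = e * Suc d"
  have "filterlim (\<lambda>n. 2 + ln (real n)) at_top sequentially"
    by (intro filterlim_tendsto_add_at_top[OF tendsto_const]
        filterlim_compose[OF ln_at_top filterlim_real_sequentially])
  then have "filterlim (\<lambda>n. ln (real n) + 2) at_top sequentially" by (simp add: add.commute)
  then have "(\<lambda>n. (ln (real n) + 2) ^ E / exp (ln (real n) + 2)) \<longlonglongrightarrow> 0"
    using filterlim_compose[OF tendsto_power_div_exp_0] by blast
  from tendsto_mult[OF tendsto_const this, of "c * C ^ Suc d * exp 2"]
  have lim: "(\<lambda>n. (c * C ^ Suc d * exp 2) * ((ln (real n) + 2) ^ E / exp (ln (real n) + 2))) \<longlonglongrightarrow> 0"
    by simp
  show ?thesis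
  proof (rule tendsto_sandwich[OF _ _ tendsto_const lim])
    show "eventually (\<lambda>n. 0 \<le> c / real n * vertex_bound d j (ln (real n) + 1) ^ Suc d) sequentially"
      using eventually_ge_at_top[of 1] by eventually_elim (use c vertex_bound_nonneg in simp)
    show "eventually (\<lambda>n. c / real n * vertex_bound d j (ln (real n) + 1) ^ Suc d
             \<le> (c * C ^ Suc d * exp 2) * ((ln (real n) + 2) ^ E / exp (ln (real n) + 2))) sequentially"
      using eventually_ge_at_top[of 1]
    proof eventually_elim
      case (elim n)
      have n: "real n \<ge> 1" using elim by simp
      then have L: "0 \<le> ln (real n)" by simp
      have "vertex_bound d j (ln (real n) + 1) \<le> C * (ln (real n) + 2) ^ e"
        using C(2)[of "ln (real n) + 1"] L by (simp add: add.assoc)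
      then have "vertex_bound d j (ln (real n) + 1) ^ Suc d \<le> (C * (ln (real n) + 2) ^ e) ^ Suc d"
        using vertex_bound_nonneg L by (intro power_mono) auto
      also have "\<dots> = C ^ Suc d * (ln (real n) + 2) ^ E" unfolding E_def power_mult power_mult_distrib ..
      finally have "c / real n * vertex_bound d j (ln (real n) + 1) ^ Suc d
          \<le> c / real n * (C ^ Suc d * (ln (real n) + 2) ^ E)"
        using c n by (intro mult_left_mono) auto
      also have "\<dots> = (c * C ^ Suc d * exp 2) * ((ln (real n) + 2) ^ E / exp (ln (real n) + 2))"
        using n by (simp add: exp_add field_simps)
      finally show ?case .
    qed
  qed
qed

theorem claim1:
  fixes d k :: nat and c :: real and \<tau> :: "nat \<Rightarrow> nat set"
  assumes "d \<ge> 2" and "c > 0"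
    and "\<And>n. n \<ge> d \<Longrightarrow> \<tau> n \<in> faces n (d - 1)"
  shows "(\<lambda>n. prob_Yd n d (c / real n)
            (\<lambda>Y. is_dtree d (S Y d (\<tau> n) (Suc k)) \<and>
                 (\<forall>\<eta>\<in>faces n (d - 1). real (card {\<sigma>\<in>Y. \<eta> \<subseteq> \<sigma>}) \<le> ln (real n))))
         \<longlonglongrightarrow> 1"
proof -
  define M where "M n = nat \<lfloor>ln (real n)\<rfloor> + 1" for n :: nat
  define err where "err n = real n ^ d * (real n ^ M n / fact (M n) * (c / real n) ^ M n)
    + c / real n * vertex_bound d (Suc k) (ln (real n) + 1) ^ Suc d" for n
  have err: "err \<longlonglongrightarrow> 0"
    unfolding err_def M_def
    by (intro tendsto_add_zero tendsto_degree_tail_bound tendsto_nontree_bound assms(2))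
  define P where "P n = Pr (faces n d) (c / real n)
    (\<lambda>Y. is_dtree d (S Y d (\<tau> n) (Suc k)) \<and> degree_bounded n d (ln (real n)) Y)" for n
  have "eventually (\<lambda>n. 1 - err n \<le> P n \<and> P n \<le> 1) sequentially"
    using eventually_ge_at_top[of "max d (nat \<lceil>c\<rceil>) + 1"]
  proof eventually_elim
    case (elim n)
    then have "c \<le> real n" "n \<ge> d" "n \<ge> 1" by linarith+
    then have p: "0 \<le> c / real n" "c / real n \<le> 1" using assms(2) by simp_all
    have "d \<ge> 1" "0 \<le> ln (real n)" using assms(1) \<open>n \<ge> 1\<close> by simp_all
    from Pr_dtree_and_degree_bounded_ge[OF this(1) assms(3)[OF \<open>n \<ge> d\<close>] p this(2)]
    show ?case
      unfolding P_def err_def M_def by (intro conjI Pr_le_1[OF finite_faces p])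
  qed
  then show ?thesis
    unfolding prob_Yd_eq_Pr degree_bounded_def[symmetric] P_def[symmetric]
    using tendsto_sandwich[OF _ _ tendsto_diff[OF tendsto_const err, of 1] tendsto_const]
    by (simp add: eventually_conj_iff)
qed

end
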